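(* For all programs $P,P',S,Q$: if $P\sqsubseteq P'$ and the operational triple $\{|P'|\}\ S\ \{|Q|\}$ holds, then $\{|P|\}\ S\ \{|Q|\}$ holds.
   Context: Programs are statements of a sequential imperative language with a standard small-step operational semantics over program states. $\mathrm{behs}(P)$ is the set of pairs (initial state, final state) of finite terminating executions of $P$; $(s,u)\in\mathrm{behs}(P;Q)$ iff there is $t$ with $(s,t)\in\mathrm{behs}(P)$ and $(t,u)\in\mathrm{behs}(Q)$. The post-state set is $\mathrm{pst}(P)=\{t:\exists s,\ (s,t)\in\mathrm{behs}(P)\}$. Program ordering: $P\sqsubseteq Q$ iff $\mathrm{pst}(P)\subseteq\mathrm{pst}(Q)$. The operational triple $\{|P|\}\ S\ \{|Q|\}$ is defined to mean $\mathrm{pst}(P;S)\subseteq\mathrm{pst}(Q)$. *)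

theory Defs
  imports Main
begin

(* Programs are abstract ('p); their semantics is given by
   behs :: 'p => ('s * 's) set (finite terminating executions),
   and sequential composition seq :: 'p => 'p => 'p. *)

definition pst :: "('p \<Rightarrow> ('s \<times> 's) set) \<Rightarrow> 'p \<Rightarrow> 's set" where
  "pst behs P = {t. \<exists>s. (s, t) \<in> behs P}"

definition prog_le :: "('p \<Rightarrow> ('s \<times> 's) set) \<Rightarrow> 'p \<Rightarrow> 'p \<Rightarrow> bool" where
  "prog_le behs P Q \<longleftrightarrow> pst behs P \<subseteq> pst behs Q"

definition op_triple :: "('p \<Rightarrow> ('s \<times> 's) set) \<Rightarrow> ('p \<Rightarrow> 'p \<Rightarrow> 'p) \<Rightarrow> 'p \<Rightarrow> 'p \<Rightarrow> 'p \<Rightarrow> bool" where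
  "op_triple behs seq P S Q \<longleftrightarrow> pst behs (seq P S) \<subseteq> pst behs Q"

end

theory Submission
  imports Defs
begin

(* The post-states of P;S are the image of the post-states of P under the relation behs S,
   and relational image is monotone in the set of start states. *)

lemma pst_seq_eq_Image:
  assumes seq_behs: "\<And>P Q s u. (s, u) \<in> behs (seq P Q) \<longleftrightarrow> (\<exists>t. (s, t) \<in> behs P \<and> (t, u) \<in> behs Q)"
  shows "pst behs (seq P S) = behs S `` pst behs P"
  unfolding pst_def using seq_behs by blast

lemma prog_le_seq_left:
  assumes seq_behs: "\<And>P Q s u. (s, u) \<in> behs (seq P Q) \<longleftrightarrow> (\<exists>t. (s, t) \<in> behs P \<and> (t, u) \<in> behs Q)"
    and "prog_le behs P P'"
  shows "prog_le behs (seq P S) (seq P' S)"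
  using assms(2) unfolding prog_le_def pst_seq_eq_Image[OF seq_behs] by (rule Image_mono[OF order_refl])

theorem proposition6:
  fixes behs :: "'p \<Rightarrow> ('s \<times> 's) set" and seq :: "'p \<Rightarrow> 'p \<Rightarrow> 'p"
  assumes seq_behs: "\<And>P Q s u. (s, u) \<in> behs (seq P Q) \<longleftrightarrow> (\<exists>t. (s, t) \<in> behs P \<and> (t, u) \<in> behs Q)"
    and "prog_le behs P P'"
    and "op_triple behs seq P' S Q"
  shows "op_triple behs seq P S Q"
proof -
  have "prog_le behs (seq P S) (seq P' S)"
    using seq_behs assms(2) by (rule prog_le_seq_left)
  with assms(3) show ?thesis
    unfolding op_triple_def prog_le_def by (rule order_trans[rotated])
qed

end
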